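(* Let $f:\mathbb{R}^n\to\mathbb{R}$ be continuously differentiable and strictly concave, and $g=(g_1,\dots,g_m):\mathbb{R}^n\to\mathbb{R}^m$ be continuously differentiable with each $g_i$ convex, with $\nabla f$ and each $\nabla g_i$ locally Lipschitz. Assume there exists $x\in\mathbb{R}^n$ with $g(x)<\mathbf{0}_m$ componentwise (Slater's condition). Consider the primal-dual dynamics on $\mathbb{R}^n\times\mathbb{R}^m_{\ge0}$: $$\dot x=\nabla f(x)-\sum_{i=1}^m\lambda_i\nabla g_i(x),\qquad \dot\lambda=[g(x)]^+_\lambda .$$ Then the omega-limit set of any (Caratheodory) solution of this dynamics starting from any point in $\mathbb{R}^n\times\mathbb{R}^m_{\ge0}$ is invariant under this dynamics.
   Context: For scalars $a,b$, $[a]^+_b=a$ if $b>0$ and $[a]^+_b=\max\{0,a\}$ if $b=0$; for vectors, componentwise. A Caratheodory solution of $\dot z=F(z)$ on $[0,T)$ is an absolutely continuous map $\gamma$ with $\dot\gamma(t)=F(\gamma(t))$ for almost every $t$. For a solution $\gamma$ defined on $[0,\infty)$, its omega-limit set is $\Omega(\gamma)=\{y:\exists t_k\to\infty \text{ with } \gamma(t_k)\to y\}$. A set $S$ is invariant if every solution starting in $S$ remains in $S$. *)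

theory Defs
  imports "HOL-Analysis.Analysis"
begin

definition strictly_concave_on :: "'a::real_vector set \<Rightarrow> ('a \<Rightarrow> real) \<Rightarrow> bool" where
  "strictly_concave_on S f \<longleftrightarrow>
     (\<forall>x\<in>S. \<forall>y\<in>S. \<forall>t::real. x \<noteq> y \<and> 0 < t \<and> t < 1 \<longrightarrow>
        f ((1 - t) *\<^sub>R x + t *\<^sub>R y) > (1 - t) * f x + t * f y)"

definition locally_lipschitz :: "('a::metric_space \<Rightarrow> 'b::metric_space) \<Rightarrow> bool" where
  "locally_lipschitz F \<longleftrightarrow>
     (\<forall>x. \<exists>r>0. \<exists>L. \<forall>y\<in>ball x r. \<forall>z\<in>ball x r. dist (F y) (F z) \<le> L * dist y z)"

definition abs_continuous_on :: "real \<Rightarrow> real \<Rightarrow> (real \<Rightarrow> 'b::real_normed_vector) \<Rightarrow> bool" where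
  "abs_continuous_on a b \<gamma> \<longleftrightarrow>
     (\<forall>\<epsilon>>0. \<exists>\<delta>>0. \<forall>(k::nat) (u::nat \<Rightarrow> real) (v::nat \<Rightarrow> real).
        (\<forall>i<k. a \<le> u i \<and> u i \<le> v i \<and> v i \<le> b) \<and>
        (\<forall>i<k. \<forall>j<k. i \<noteq> j \<longrightarrow> v i \<le> u j \<or> v j \<le> u i) \<and>
        (\<Sum>i<k. v i - u i) < \<delta>
        \<longrightarrow> (\<Sum>i<k. norm (\<gamma> (v i) - \<gamma> (u i))) < \<epsilon>)"

definition caratheodory_sol ::
  "('a::euclidean_space \<Rightarrow> 'a) \<Rightarrow> 'a set \<Rightarrow> (real \<Rightarrow> 'a) \<Rightarrow> real \<Rightarrow> bool" where
  "caratheodory_sol F D \<gamma> T \<longleftrightarrow>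
     (\<forall>t\<in>{0..<T}. \<gamma> t \<in> D) \<and>
     (\<forall>b. 0 \<le> b \<and> b < T \<longrightarrow> abs_continuous_on 0 b \<gamma>) \<and>
     negligible {t \<in> {0..<T}. \<not> (\<gamma> has_vector_derivative F (\<gamma> t)) (at t)}"

definition caratheodory_sol_inf ::
  "('a::euclidean_space \<Rightarrow> 'a) \<Rightarrow> 'a set \<Rightarrow> (real \<Rightarrow> 'a) \<Rightarrow> bool" where
  "caratheodory_sol_inf F D \<gamma> \<longleftrightarrow> (\<forall>T>0. caratheodory_sol F D \<gamma> T)"

definition omega_limit :: "(real \<Rightarrow> 'a::metric_space) \<Rightarrow> 'a set" where
  "omega_limit \<gamma> = {y. \<exists>s::nat \<Rightarrow> real. filterlim s at_top sequentially \<and> (\<lambda>k. \<gamma> (s k)) \<longlonglongrightarrow> y}"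

definition invariant_set ::
  "('a::euclidean_space \<Rightarrow> 'a) \<Rightarrow> 'a set \<Rightarrow> 'a set \<Rightarrow> bool" where
  "invariant_set F D S \<longleftrightarrow>
     (\<forall>\<gamma> T. T > 0 \<and> caratheodory_sol F D \<gamma> T \<and> \<gamma> 0 \<in> S \<longrightarrow> (\<forall>t\<in>{0..<T}. \<gamma> t \<in> S))"

definition proj_pos :: "real \<Rightarrow> real \<Rightarrow> real" where
  "proj_pos a b = (if b > 0 then a else max 0 a)"

definition primal_dual_field ::
  "(real^'n \<Rightarrow> real^'n) \<Rightarrow> ('m::finite \<Rightarrow> real^'n \<Rightarrow> real) \<Rightarrow> ('m \<Rightarrow> real^'n \<Rightarrow> real^'n)
   \<Rightarrow> (real^'n) \<times> (real^'m) \<Rightarrow> (real^'n) \<times> (real^'m)" where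
  "primal_dual_field df g dg z =
     (case z of (x, l) \<Rightarrow>
       (df x - (\<Sum>i\<in>UNIV. (l $ i) *\<^sub>R dg i x), \<chi> i. proj_pos (g i x) (l $ i)))"

definition pd_domain :: "((real^'n) \<times> (real^'m)) set" where
  "pd_domain = {(x, l). \<forall>i. 0 \<le> l $ i}"

end

theory Submission
  imports Defs
begin

text \<open>
  The primal-dual field \<open>F\<close> is the Lagrangian gradient field \<open>G\<close> with the multiplier
  component projected by \<open>[\<cdot>]\<^sup>+\<^sub>\<lambda>\<close>, and this projection is monotone:
  \<open>(z\<^sub>1 - z\<^sub>2) \<bullet> (F z\<^sub>1 - F z\<^sub>2) \<le> (z\<^sub>1 - z\<^sub>2) \<bullet> (G z\<^sub>1 - G z\<^sub>2)\<close> on the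
  domain. As \<open>G\<close> is locally Lipschitz, \<open>F\<close> is one-sided Lipschitz with some constant \<open>L\<close> near
  any compact piece of a trajectory \<open>\<eta>\<close>, and for a second solution \<open>\<zeta>\<close> the absolutely
  continuous function \<open>exp (- 2 L t) |\<zeta> t - \<eta> t|\<^sup>2\<close> has nonpositive derivative almost
  everywhere, hence does not increase. This continuous dependence on the initial state gives
  invariance: if \<open>\<gamma> (s\<^sub>k) \<rightarrow> \<eta> 0\<close> then the shifted solutions satisfy
  \<open>\<gamma> (t + s\<^sub>k) \<rightarrow> \<eta> t\<close>.
\<close>

hide_const (open) Polynomial.content

section \<open>Absolutely continuous functions\<close>

definition nonoverlapping_intervals :: "real \<Rightarrow> real \<Rightarrow> nat \<Rightarrow> (nat \<Rightarrow> real) \<Rightarrow> (nat \<Rightarrow> real) \<Rightarrow> bool" where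
  "nonoverlapping_intervals a b k u v \<longleftrightarrow>
     (\<forall>i<k. a \<le> u i \<and> u i \<le> v i \<and> v i \<le> b) \<and> (\<forall>i<k. \<forall>j<k. i \<noteq> j \<longrightarrow> v i \<le> u j \<or> v j \<le> u i)"

lemma abs_continuous_on_iff:
  "abs_continuous_on a b \<gamma> \<longleftrightarrow>
     (\<forall>\<epsilon>>0. \<exists>\<delta>>0. \<forall>k u v. nonoverlapping_intervals a b k u v \<longrightarrow> (\<Sum>i<k. v i - u i) < \<delta> \<longrightarrow>
        (\<Sum>i<k. norm (\<gamma> (v i) - \<gamma> (u i))) < \<epsilon>)"
  unfolding abs_continuous_on_def nonoverlapping_intervals_def by (simp add: imp_conjL)

lemma abs_continuous_onI:
  assumes "\<And>\<epsilon>. \<epsilon> > 0 \<Longrightarrow> \<exists>\<delta>>0. \<forall>k u v. nonoverlapping_intervals a b k u v \<longrightarrow> (\<Sum>i<k. v i - u i) < \<delta> \<longrightarrow>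
             (\<Sum>i<k. norm (\<gamma> (v i) - \<gamma> (u i))) < \<epsilon>"
  shows "abs_continuous_on a b \<gamma>"
  using assms unfolding abs_continuous_on_iff by blast

lemma abs_continuous_onE:
  assumes "abs_continuous_on a b \<gamma>" "\<epsilon> > 0"
  obtains \<delta> where "\<delta> > 0"
    "\<And>k u v. nonoverlapping_intervals a b k u v \<Longrightarrow> (\<Sum>i<k. v i - u i) < \<delta> \<Longrightarrow>
       (\<Sum>i<k. norm (\<gamma> (v i) - \<gamma> (u i))) < \<epsilon>"
  using assms unfolding abs_continuous_on_iff by blast

lemma abs_continuous_on_subinterval:
  assumes "abs_continuous_on a b \<gamma>" "a \<le> c" "d \<le> b"
  shows "abs_continuous_on c d \<gamma>"
proof (rule abs_continuous_onI)
  fix \<epsilon> :: real assume "\<epsilon> > 0"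
  from assms(1) \<open>\<epsilon> > 0\<close> obtain \<delta> where "\<delta> > 0" and \<delta>: "\<And>k u v. nonoverlapping_intervals a b k u v \<Longrightarrow>
      (\<Sum>i<k. v i - u i) < \<delta> \<Longrightarrow> (\<Sum>i<k. norm (\<gamma> (v i) - \<gamma> (u i))) < \<epsilon>"
    by (rule abs_continuous_onE) blast
  moreover have "nonoverlapping_intervals a b k u v" if "nonoverlapping_intervals c d k u v" for k u v
    using that assms(2,3) unfolding nonoverlapping_intervals_def by force
  ultimately show "\<exists>\<delta>>0. \<forall>k u v. nonoverlapping_intervals c d k u v \<longrightarrow> (\<Sum>i<k. v i - u i) < \<delta> \<longrightarrow>
      (\<Sum>i<k. norm (\<gamma> (v i) - \<gamma> (u i))) < \<epsilon>"
    by blast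
qed

lemma abs_continuous_on_shift:
  assumes "abs_continuous_on a b \<gamma>"
  shows "abs_continuous_on (a - s) (b - s) (\<lambda>t. \<gamma> (t + s))"
proof (rule abs_continuous_onI)
  fix \<epsilon> :: real assume "\<epsilon> > 0"
  from assms \<open>\<epsilon> > 0\<close> obtain \<delta> where "\<delta> > 0" and \<delta>: "\<And>k u v. nonoverlapping_intervals a b k u v \<Longrightarrow>
      (\<Sum>i<k. v i - u i) < \<delta> \<Longrightarrow> (\<Sum>i<k. norm (\<gamma> (v i) - \<gamma> (u i))) < \<epsilon>"
    by (rule abs_continuous_onE) blast
  have "(\<Sum>i<k. norm (\<gamma> (v i + s) - \<gamma> (u i + s))) < \<epsilon>"
    if "nonoverlapping_intervals (a - s) (b - s) k u v" "(\<Sum>i<k. v i - u i) < \<delta>" for k u v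
    using \<delta>[of k "\<lambda>i. u i + s" "\<lambda>i. v i + s"] that
    unfolding nonoverlapping_intervals_def by force
  with \<open>\<delta> > 0\<close> show "\<exists>\<delta>>0. \<forall>k u v. nonoverlapping_intervals (a - s) (b - s) k u v \<longrightarrow>
      (\<Sum>i<k. v i - u i) < \<delta> \<longrightarrow> (\<Sum>i<k. norm (\<gamma> (v i + s) - \<gamma> (u i + s))) < \<epsilon>"
    by blast
qed

lemma abs_continuous_on_imp_continuous_on:
  assumes "abs_continuous_on a b \<gamma>"
  shows "continuous_on {a..b} \<gamma>"
  unfolding continuous_on_iff
proof (intro ballI allI impI)
  fix t \<epsilon> assume t: "t \<in> {a..b}" and "(0::real) < \<epsilon>"
  from assms \<open>\<epsilon> > 0\<close> obtain \<delta> where "\<delta> > 0" and \<delta>: "\<And>k u v. nonoverlapping_intervals a b k u v \<Longrightarrow>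
      (\<Sum>i<k. v i - u i) < \<delta> \<Longrightarrow> (\<Sum>i<k. norm (\<gamma> (v i) - \<gamma> (u i))) < \<epsilon>"
    by (rule abs_continuous_onE) blast
  have "dist (\<gamma> s) (\<gamma> t) < \<epsilon>" if s: "s \<in> {a..b}" "dist s t < \<delta>" for s
    using \<delta>[of 1 "\<lambda>_. min s t" "\<lambda>_. max s t"] s t
    by (cases "s \<le> t") (auto simp: nonoverlapping_intervals_def dist_norm norm_minus_commute)
  with \<open>\<delta> > 0\<close> show "\<exists>\<delta>>0. \<forall>s\<in>{a..b}. dist s t < \<delta> \<longrightarrow> dist (\<gamma> s) (\<gamma> t) < \<epsilon>"
    by blast
qed

lemma abs_continuous_on_dominated:
  fixes \<phi> :: "real \<Rightarrow> 'c::real_normed_vector"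
    and w1 :: "real \<Rightarrow> 'a::real_normed_vector" and w2 :: "real \<Rightarrow> 'b::real_normed_vector"
  assumes w1: "abs_continuous_on a b w1" and w2: "abs_continuous_on a b w2" and "A \<ge> 0" "B \<ge> 0"
    and dom: "\<And>u v. a \<le> u \<Longrightarrow> u \<le> v \<Longrightarrow> v \<le> b \<Longrightarrow>
       norm (\<phi> v - \<phi> u) \<le> A * (norm (w1 v - w1 u) + norm (w2 v - w2 u)) + B * (v - u)"
  shows "abs_continuous_on a b \<phi>"
proof (rule abs_continuous_onI)
  fix \<epsilon> :: real assume "\<epsilon> > 0"
  define \<epsilon>' where "\<epsilon>' = \<epsilon> / (3 * (A + 1))"
  have "\<epsilon>' > 0" using \<open>\<epsilon> > 0\<close> \<open>A \<ge> 0\<close> by (simp add: \<epsilon>'_def)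
  obtain \<delta>1 where "\<delta>1 > 0" and \<delta>1: "\<And>k u v. nonoverlapping_intervals a b k u v \<Longrightarrow>
      (\<Sum>i<k. v i - u i) < \<delta>1 \<Longrightarrow> (\<Sum>i<k. norm (w1 (v i) - w1 (u i))) < \<epsilon>'"
    using w1 \<open>\<epsilon>' > 0\<close> by (rule abs_continuous_onE) blast
  obtain \<delta>2 where "\<delta>2 > 0" and \<delta>2: "\<And>k u v. nonoverlapping_intervals a b k u v \<Longrightarrow>
      (\<Sum>i<k. v i - u i) < \<delta>2 \<Longrightarrow> (\<Sum>i<k. norm (w2 (v i) - w2 (u i))) < \<epsilon>'"
    using w2 \<open>\<epsilon>' > 0\<close> by (rule abs_continuous_onE) blast
  define \<delta> where "\<delta> = min (min \<delta>1 \<delta>2) (\<epsilon> / (3 * (B + 1)))"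
  have "\<delta> > 0" using \<open>\<delta>1 > 0\<close> \<open>\<delta>2 > 0\<close> \<open>\<epsilon> > 0\<close> \<open>B \<ge> 0\<close> by (simp add: \<delta>_def)
  moreover have "(\<Sum>i<k. norm (\<phi> (v i) - \<phi> (u i))) < \<epsilon>"
    if uv: "nonoverlapping_intervals a b k u v" and small: "(\<Sum>i<k. v i - u i) < \<delta>" for k u v
  proof -
    have "(\<Sum>i<k. norm (\<phi> (v i) - \<phi> (u i)))
        \<le> (\<Sum>i<k. A * (norm (w1 (v i) - w1 (u i)) + norm (w2 (v i) - w2 (u i))) + B * (v i - u i))"
      using uv by (intro sum_mono dom) (auto simp: nonoverlapping_intervals_def)
    also have "\<dots> = A * ((\<Sum>i<k. norm (w1 (v i) - w1 (u i))) + (\<Sum>i<k. norm (w2 (v i) - w2 (u i))))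
        + B * (\<Sum>i<k. v i - u i)"
      by (simp add: sum.distrib sum_distrib_left distrib_left)
    also have "\<dots> \<le> A * (2 * \<epsilon>') + B * (\<epsilon> / (3 * (B + 1)))"
      using \<delta>1[OF uv] \<delta>2[OF uv] small \<open>A \<ge> 0\<close> \<open>B \<ge> 0\<close>
      by (intro add_mono mult_left_mono) (auto simp: \<delta>_def)
    also have "\<dots> < \<epsilon>"
    proof -
      have "A * (2 * \<epsilon>') \<le> 2 * \<epsilon> / 3"
        using \<open>\<epsilon> > 0\<close> \<open>A \<ge> 0\<close> by (simp add: \<epsilon>'_def field_simps)
      moreover have "B * (\<epsilon> / (3 * (B + 1))) < \<epsilon> / 3"
        using \<open>\<epsilon> > 0\<close> \<open>B \<ge> 0\<close> by (simp add: field_simps)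
      ultimately show ?thesis by linarith
    qed
    finally show ?thesis .
  qed
  ultimately show "\<exists>\<delta>>0. \<forall>k u v. nonoverlapping_intervals a b k u v \<longrightarrow> (\<Sum>i<k. v i - u i) < \<delta> \<longrightarrow>
      (\<Sum>i<k. norm (\<phi> (v i) - \<phi> (u i))) < \<epsilon>"
    by blast
qed

lemma has_real_derivative_nonpos_straddle:
  assumes "(\<psi> has_real_derivative D) (at t)" "D \<le> 0" "\<epsilon> > 0"
  obtains r where "r > 0"
    "\<And>u v. t - r < u \<Longrightarrow> u \<le> t \<Longrightarrow> t \<le> v \<Longrightarrow> v < t + r \<Longrightarrow> \<psi> v - \<psi> u \<le> \<epsilon> * (v - u)"
proof -
  have "(\<psi> has_derivative (\<lambda>h. D * h)) (at t)"
    using assms(1) by (simp add: has_field_derivative_def)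
  then obtain r where "r > 0" and r: "\<And>y. norm (y - t) < r \<Longrightarrow>
      norm (\<psi> y - \<psi> t - D * (y - t)) \<le> (\<epsilon> / 2) * norm (y - t)"
    using assms(3) unfolding has_derivative_at_alt by (meson half_gt_zero)
  have "\<psi> v - \<psi> u \<le> \<epsilon> * (v - u)" if uv: "t - r < u" "u \<le> t" "t \<le> v" "v < t + r" for u v
  proof -
    have "\<bar>\<psi> v - \<psi> t - D * (v - t)\<bar> \<le> (\<epsilon> / 2) * (v - t)"
      "\<bar>\<psi> u - \<psi> t - D * (u - t)\<bar> \<le> (\<epsilon> / 2) * (t - u)"
      using r[of v] r[of u] uv by auto
    moreover have "D * (v - t) \<le> 0" "D * (u - t) \<ge> 0"
      using uv assms(2) by (auto intro: mult_nonpos_nonneg mult_nonpos_nonpos)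
    ultimately show ?thesis unfolding abs_le_iff by (simp add: algebra_simps)
  qed
  with \<open>r > 0\<close> show thesis by (rule that)
qed

lemma tagged_division_of_real_interval:
  assumes p: "p tagged_division_of {a..b::real}" and xK: "(x, K) \<in> p"
  shows "K = {Inf K..Sup K}" "a \<le> Inf K" "Inf K \<le> x" "x \<le> Sup K" "Sup K \<le> b"
    "content K = Sup K - Inf K"
proof -
  obtain u v where K: "K = {u..v}" using tagged_division_ofD(4)[OF p xK] by (metis box_real(2))
  have "x \<in> K" "K \<subseteq> {a..b}" using tagged_division_ofD(2,3)[OF p xK] by auto
  then show "K = {Inf K..Sup K}" "a \<le> Inf K" "Inf K \<le> x" "x \<le> Sup K" "Sup K \<le> b"
    "content K = Sup K - Inf K"
    unfolding K by auto
qed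

lemma interior_disjoint_intervals_separated:
  fixes u v u' v' :: real
  assumes "u < v" "u' < v'" "interior {u..v} \<inter> interior {u'..v'} = {}"
  shows "v \<le> u' \<or> v' \<le> u"
proof (rule ccontr)
  assume "\<not> ?thesis"
  then have "max u u' < min v v'" using assms(1,2) by auto
  then have "(max u u' + min v v') / 2 \<in> {u<..<v} \<inter> {u'<..<v'}" by auto
  then show False using assms(3) by auto
qed

lemma tagged_division_of_enumerate_nonoverlapping:
  assumes p: "p tagged_division_of {a..b::real}" and "q \<subseteq> p"
    and nondegenerate: "\<And>x K. (x, K) \<in> q \<Longrightarrow> Inf K < Sup K"
  obtains u v where "nonoverlapping_intervals a b (card q) u v"
    "\<And>F. (\<Sum>i<card q. F (u i) (v i)) = (\<Sum>(x,K)\<in>q. F (Inf K) (Sup K))"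
proof -
  note K = tagged_division_of_real_interval[OF p]
  have "finite q" using p \<open>q \<subseteq> p\<close> by (blast intro: finite_subset)
  then obtain h where h: "bij_betw h {..<card q} q"
    using ex_bij_betw_nat_finite lessThan_atLeast0 by metis
  define u where "u i = Inf (snd (h i))" for i
  define v where "v i = Sup (snd (h i))" for i
  have hq: "h i \<in> p" "u i < v i" "snd (h i) = {u i..v i}" "a \<le> u i" "v i \<le> b"
    if "i < card q" for i
  proof -
    have "h i \<in> q" using bij_betw_apply[OF h] that by simp
    then show "h i \<in> p" "u i < v i"
      using \<open>q \<subseteq> p\<close> nondegenerate[of "fst (h i)" "snd (h i)"] by (auto simp: u_def v_def)
    then show "snd (h i) = {u i..v i}" "a \<le> u i" "v i \<le> b"
      using K[of "fst (h i)" "snd (h i)"] by (auto simp: u_def v_def)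
  qed
  have "nonoverlapping_intervals a b (card q) u v"
    unfolding nonoverlapping_intervals_def
  proof (intro conjI allI impI)
    fix i j assume ij: "i < card q" "j < card q" "i \<noteq> j"
    then have "h i \<noteq> h j" using h by (auto simp: bij_betw_def inj_on_def)
    then have "interior {u i..v i} \<inter> interior {u j..v j} = {}"
      using tagged_division_ofD(5)[OF p, of "fst (h i)" _ "fst (h j)"] hq[OF ij(1)] hq[OF ij(2)]
      by (metis prod.collapse)
    then show "v i \<le> u j \<or> v j \<le> u i"
      using interior_disjoint_intervals_separated hq(2) ij(1,2) by blast
  qed (use hq in force)+
  moreover have "(\<Sum>i<card q. F (u i) (v i)) = (\<Sum>(x,K)\<in>q. F (Inf K) (Sup K))" for F
    using sum.reindex_bij_betw[OF h, of "\<lambda>(x,K). F (Inf K) (Sup K)"]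
    by (simp add: u_def v_def case_prod_beta)
  ultimately show thesis by (rule that)
qed

lemma abs_continuous_on_tagged_division_sum:
  fixes \<psi> :: "real \<Rightarrow> 'b::real_normed_vector"
  assumes "abs_continuous_on a b \<psi>" "\<epsilon> > 0"
  obtains \<delta> where "\<delta> > 0"
    "\<And>p q. p tagged_division_of {a..b} \<Longrightarrow> q \<subseteq> p \<Longrightarrow> (\<Sum>(x,K)\<in>q. content K) < \<delta> \<Longrightarrow>
       (\<Sum>(x,K)\<in>q. norm (\<psi> (Sup K) - \<psi> (Inf K))) < \<epsilon>"
proof -
  from assms obtain \<delta> where "\<delta> > 0" and \<delta>: "\<And>k u v. nonoverlapping_intervals a b k u v \<Longrightarrow>
      (\<Sum>i<k. v i - u i) < \<delta> \<Longrightarrow> (\<Sum>i<k. norm (\<psi> (v i) - \<psi> (u i))) < \<epsilon>"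
    by (rule abs_continuous_onE) blast
  have "(\<Sum>(x,K)\<in>q. norm (\<psi> (Sup K) - \<psi> (Inf K))) < \<epsilon>"
    if p: "p tagged_division_of {a..b}" and "q \<subseteq> p" and small: "(\<Sum>(x,K)\<in>q. content K) < \<delta>"
    for p q
  proof -
    note K = tagged_division_of_real_interval[OF p]
    have "finite q" using p \<open>q \<subseteq> p\<close> by (blast intro: finite_subset)
    define q' where "q' = {(x,K) \<in> q. Inf K < Sup K}"
    have "q' \<subseteq> q" by (auto simp: q'_def)
    obtain u v where uv: "nonoverlapping_intervals a b (card q') u v"
      and reindex: "\<And>F :: real \<Rightarrow> real \<Rightarrow> real.
        (\<Sum>i<card q'. F (u i) (v i)) = (\<Sum>(x,K)\<in>q'. F (Inf K) (Sup K))"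
      using \<open>q' \<subseteq> q\<close> \<open>q \<subseteq> p\<close>
      by (rule tagged_division_of_enumerate_nonoverlapping[OF p order.trans]) (auto simp: q'_def)
    have "(\<Sum>i<card q'. v i - u i) = (\<Sum>(x,K)\<in>q'. content K)"
      unfolding reindex[of "\<lambda>u v. v - u"] using \<open>q' \<subseteq> q\<close> \<open>q \<subseteq> p\<close>
      by (intro sum.cong) (auto simp: K(6))
    also have "\<dots> \<le> (\<Sum>(x,K)\<in>q. content K)"
      using \<open>finite q\<close> \<open>q' \<subseteq> q\<close> by (intro sum_mono2) auto
    finally have "(\<Sum>i<card q'. norm (\<psi> (v i) - \<psi> (u i))) < \<epsilon>"
      using \<delta>[OF uv] small by linarith
    moreover have "(\<Sum>(x,K)\<in>q. norm (\<psi> (Sup K) - \<psi> (Inf K))) = (\<Sum>(x,K)\<in>q'. norm (\<psi> (Sup K) - \<psi> (Inf K)))"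
    proof (rule sum.mono_neutral_right[OF \<open>finite q\<close> \<open>q' \<subseteq> q\<close>], safe)
      fix x K assume "(x, K) \<in> q" "(x, K) \<notin> q'"
      then have "Inf K = Sup K" using \<open>q \<subseteq> p\<close> K(3,4)[of x K] by (force simp: q'_def)
      then show "norm (\<psi> (Sup K) - \<psi> (Inf K)) = 0" by simp
    qed
    ultimately show ?thesis using reindex[of "\<lambda>u v. norm (\<psi> v - \<psi> u)"] by simp
  qed
  with \<open>\<delta> > 0\<close> show thesis by (rule that)
qed

lemma negligible_gauge_content_small:
  fixes E :: "'a::euclidean_space set"
  assumes "negligible E" "\<delta> > 0"
  obtains \<gamma> where "gauge \<gamma>"
    "\<And>p. p tagged_division_of cbox a b \<Longrightarrow> \<gamma> fine p \<Longrightarrow> (\<Sum>(x,K)\<in>{(x,K) \<in> p. x \<in> E}. content K) < \<delta>"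
proof -
  have "(indicat_real E has_integral 0) (cbox a b)" using assms(1) unfolding negligible by blast
  then obtain \<gamma> where "gauge \<gamma>" and \<gamma>: "\<And>p. p tagged_division_of cbox a b \<Longrightarrow> \<gamma> fine p \<Longrightarrow>
      norm ((\<Sum>(x,K)\<in>p. content K *\<^sub>R indicat_real E x) - 0) < \<delta>"
    using \<open>\<delta> > 0\<close> unfolding has_integral by meson
  have "(\<Sum>(x,K)\<in>{(x,K) \<in> p. x \<in> E}. content K) < \<delta>"
    if p: "p tagged_division_of cbox a b" and "\<gamma> fine p" for p
  proof -
    have "finite p" using p by blast
    then have "(\<Sum>(x,K)\<in>{(x,K) \<in> p. x \<in> E}. content K) = (\<Sum>(x,K)\<in>p. content K *\<^sub>R indicat_real E x)"
      by (intro sum.mono_neutral_cong_left) (auto simp: indicator_def split: if_splits)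
    also have "\<dots> < \<delta>" using \<gamma>[OF that] by simp
    finally show ?thesis .
  qed
  with \<open>gauge \<gamma>\<close> show thesis by (rule that)
qed

lemma has_real_derivative_nonpos_gauge:
  fixes \<psi> :: "real \<Rightarrow> real"
  assumes der: "\<And>t. t \<in> S \<Longrightarrow> \<exists>D. (\<psi> has_real_derivative D) (at t) \<and> D \<le> 0" and "\<epsilon> > 0"
  obtains \<gamma> where "gauge \<gamma>"
    "\<And>x u v. x \<in> S \<Longrightarrow> x \<in> {u..v} \<Longrightarrow> {u..v} \<subseteq> \<gamma> x \<Longrightarrow> \<psi> v - \<psi> u \<le> \<epsilon> * (v - u)"
proof -
  have "\<exists>r>0. \<forall>u v. t - r < u \<longrightarrow> u \<le> t \<longrightarrow> t \<le> v \<longrightarrow> v < t + r \<longrightarrow> \<psi> v - \<psi> u \<le> \<epsilon> * (v - u)"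
    if "t \<in> S" for t
  proof -
    obtain D where "(\<psi> has_real_derivative D) (at t)" "D \<le> 0" using der \<open>t \<in> S\<close> by blast
    then obtain r where "r > 0" "\<And>u v. t - r < u \<Longrightarrow> u \<le> t \<Longrightarrow> t \<le> v \<Longrightarrow> v < t + r \<Longrightarrow>
        \<psi> v - \<psi> u \<le> \<epsilon> * (v - u)"
      using \<open>\<epsilon> > 0\<close> by (rule has_real_derivative_nonpos_straddle) blast
    then show ?thesis by blast
  qed
  then obtain r where r: "\<And>t. t \<in> S \<Longrightarrow> r t > 0" and straddle: "\<And>t u v. t \<in> S \<Longrightarrow> t - r t < u \<Longrightarrow>
      u \<le> t \<Longrightarrow> t \<le> v \<Longrightarrow> v < t + r t \<Longrightarrow> \<psi> v - \<psi> u \<le> \<epsilon> * (v - u)"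
    by metis
  define \<gamma> where "\<gamma> t = ball t (if t \<in> S then r t else 1)" for t
  have "gauge \<gamma>" using r by (auto simp: gauge_def \<gamma>_def)
  moreover have "\<psi> v - \<psi> u \<le> \<epsilon> * (v - u)"
    if "x \<in> S" "x \<in> {u..v}" "{u..v} \<subseteq> \<gamma> x" for x u v
  proof -
    have "u \<in> \<gamma> x" "v \<in> \<gamma> x" using that(2,3) by auto
    then have "x - r x < u" "v < x + r x" using \<open>x \<in> S\<close> by (auto simp: \<gamma>_def dist_real_def)
    with that(1,2) show ?thesis by (intro straddle) auto
  qed
  ultimately show thesis by (rule that)
qed

text \<open>Cousin's lemma for a gauge that is fine both for the straddle estimate off the exceptional
  set and for the indicator integral of the exceptional set, whose tags then carry small total
  length.\<close>
lemma abs_continuous_on_increment_le: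
  fixes \<psi> :: "real \<Rightarrow> real"
  assumes "a \<le> b" "abs_continuous_on a b \<psi>" "negligible E" "\<epsilon> > 0"
    and der: "\<And>t. t \<in> {a<..<b} \<Longrightarrow> t \<notin> E \<Longrightarrow> \<exists>D. (\<psi> has_real_derivative D) (at t) \<and> D \<le> 0"
  shows "\<psi> b - \<psi> a \<le> \<epsilon> * (b - a + 1)"
proof -
  obtain \<delta> where "\<delta> > 0" and \<delta>: "\<And>p q. p tagged_division_of {a..b} \<Longrightarrow> q \<subseteq> p \<Longrightarrow>
      (\<Sum>(x,K)\<in>q. content K) < \<delta> \<Longrightarrow> (\<Sum>(x,K)\<in>q. norm (\<psi> (Sup K) - \<psi> (Inf K))) < \<epsilon>"
    by (rule abs_continuous_on_tagged_division_sum[OF assms(2,4)]) blast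
  define E' where "E' = E \<union> {a, b}"
  have "negligible E'" using assms(3) by (simp add: E'_def)
  then obtain \<gamma>1 where "gauge \<gamma>1" and \<gamma>1: "\<And>p. p tagged_division_of {a..b} \<Longrightarrow> \<gamma>1 fine p \<Longrightarrow>
      (\<Sum>(x,K)\<in>{(x,K) \<in> p. x \<in> E'}. content K) < \<delta>"
    using \<open>\<delta> > 0\<close> by (rule negligible_gauge_content_small[where a=a and b=b, unfolded box_real]) blast
  define S where "S = {a<..<b} - E'"
  have "\<And>t. t \<in> S \<Longrightarrow> \<exists>D. (\<psi> has_real_derivative D) (at t) \<and> D \<le> 0"
    using der by (auto simp: S_def E'_def)
  then obtain \<gamma>2 where "gauge \<gamma>2" and straddle: "\<And>x u v. x \<in> S \<Longrightarrow> x \<in> {u..v} \<Longrightarrow>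
      {u..v} \<subseteq> \<gamma>2 x \<Longrightarrow> \<psi> v - \<psi> u \<le> \<epsilon> * (v - u)"
    using has_real_derivative_nonpos_gauge[OF _ \<open>\<epsilon> > 0\<close>] by metis
  obtain p where p: "p tagged_division_of {a..b}" and fine: "(\<lambda>x. \<gamma>1 x \<inter> \<gamma>2 x) fine p"
    using fine_division_exists[OF gauge_Int[OF \<open>gauge \<gamma>1\<close> \<open>gauge \<gamma>2\<close>], of a b] by auto
  note K = tagged_division_of_real_interval[OF p]
  have "finite p" using p by blast
  define bad where "bad = {(x,K)\<in>p. x \<in> E'}"
  have "bad \<subseteq> p" by (auto simp: bad_def)
  have "(\<Sum>(x,K)\<in>bad. content K) < \<delta>" using \<gamma>1[OF p] fine by (simp add: fine_Int bad_def)
  then have "(\<Sum>(x,K)\<in>bad. \<psi> (Sup K) - \<psi> (Inf K)) < \<epsilon>"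
    using \<delta>[OF p \<open>bad \<subseteq> p\<close>] sum_mono[of bad "\<lambda>(x,K). \<psi> (Sup K) - \<psi> (Inf K)"
      "\<lambda>(x,K). norm (\<psi> (Sup K) - \<psi> (Inf K))"] by fastforce
  moreover have "(\<Sum>(x,K)\<in>p - bad. \<psi> (Sup K) - \<psi> (Inf K)) \<le> \<epsilon> * (b - a)"
  proof -
    have "\<psi> (Sup K) - \<psi> (Inf K) \<le> \<epsilon> * content K" if "(x,K) \<in> p - bad" for x K
    proof -
      have xK: "(x, K) \<in> p" and "x \<in> S"
        using that K(3,4,2,5)[of x K] by (auto simp: bad_def S_def E'_def less_le)
      have "\<gamma>2 fine p" using fine by (simp add: fine_Int)
      then have "K \<subseteq> \<gamma>2 x" using xK by (rule fineD)
      then show ?thesis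
        using straddle[OF \<open>x \<in> S\<close>, of "Inf K" "Sup K"] K[OF xK] tagged_division_ofD(2)[OF p xK]
        by simp
    qed
    then have "(\<Sum>(x,K)\<in>p - bad. \<psi> (Sup K) - \<psi> (Inf K)) \<le> \<epsilon> * (\<Sum>(x,K)\<in>p - bad. content K)"
      by (auto simp: sum_distrib_left case_prod_beta intro: sum_mono)
    also have "(\<Sum>(x,K)\<in>p - bad. content K) \<le> (\<Sum>(x,K)\<in>p. content K)"
      using \<open>finite p\<close> by (intro sum_mono2) auto
    also have "(\<Sum>(x,K)\<in>p. content K) = b - a"
      using additive_content_tagged_division[of p a b] p \<open>a \<le> b\<close> by simp
    finally show ?thesis using \<open>\<epsilon> > 0\<close> by (simp add: mult_left_mono)
  qed
  moreover have "\<psi> b - \<psi> a = (\<Sum>(x,K)\<in>bad. \<psi> (Sup K) - \<psi> (Inf K)) + (\<Sum>(x,K)\<in>p - bad. \<psi> (Sup K) - \<psi> (Inf K))"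
    using additive_tagged_division_1[OF \<open>a \<le> b\<close>, of p \<psi>] p \<open>finite p\<close> \<open>bad \<subseteq> p\<close>
    by (simp add: sum.subset_diff[of bad p] case_prod_beta)
  ultimately show ?thesis by (simp add: algebra_simps)
qed

lemma abs_continuous_on_nonincreasing:
  fixes \<psi> :: "real \<Rightarrow> real"
  assumes "a \<le> b" "abs_continuous_on a b \<psi>" "negligible E"
    and "\<And>t. t \<in> {a<..<b} \<Longrightarrow> t \<notin> E \<Longrightarrow> \<exists>D. (\<psi> has_real_derivative D) (at t) \<and> D \<le> 0"
  shows "\<psi> b \<le> \<psi> a"
proof (rule field_le_epsilon)
  fix \<epsilon> :: real assume "\<epsilon> > 0"
  then have "\<psi> b - \<psi> a \<le> \<epsilon> / (b - a + 1) * (b - a + 1)"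
    using assms by (intro abs_continuous_on_increment_le) auto
  with \<open>a \<le> b\<close> show "\<psi> b \<le> \<psi> a + \<epsilon>" by simp
qed

lemma abs_exp_neg_diff_le:
  fixes c u v :: real
  assumes "c \<ge> 0" "0 \<le> u" "u \<le> v"
  shows "\<bar>exp (- c * v) - exp (- c * u)\<bar> \<le> c * (v - u)"
proof -
  define e x where "e = exp (- c * u)" and "x = exp (- (c * (v - u)))"
  have "exp (- c * v) = e * x" by (simp add: e_def x_def exp_add[symmetric] algebra_simps)
  have "0 < e" "e \<le> 1" "x \<le> 1" using assms by (auto simp: e_def x_def)
  have "1 - x \<le> c * (v - u)" using exp_ge_add_one_self[of "- (c * (v - u))"] by (simp add: x_def)
  have "\<bar>e * x - e\<bar> = e * (1 - x)"
    using \<open>0 < e\<close> \<open>x \<le> 1\<close> by (simp add: abs_if algebra_simps mult_le_cancel_left1)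
  also have "\<dots> \<le> 1 * (c * (v - u))"
    using \<open>0 < e\<close> \<open>e \<le> 1\<close> \<open>x \<le> 1\<close> \<open>1 - x \<le> c * (v - u)\<close> by (intro mult_mono) auto
  finally show ?thesis unfolding \<open>exp (- c * v) = e * x\<close> by (simp add: e_def)
qed

lemma abs_norm_sq_diff_le:
  fixes x y :: "'a::real_normed_vector"
  assumes "norm x \<le> M" "norm y \<le> M"
  shows "\<bar>(norm x)\<^sup>2 - (norm y)\<^sup>2\<bar> \<le> 2 * M * norm (x - y)"
proof -
  have "(norm x)\<^sup>2 - (norm y)\<^sup>2 = (norm x - norm y) * (norm x + norm y)"
    by (simp add: power2_eq_square algebra_simps)
  then have "\<bar>(norm x)\<^sup>2 - (norm y)\<^sup>2\<bar> = \<bar>norm x - norm y\<bar> * (norm x + norm y)"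
    by (simp add: abs_mult)
  also have "\<dots> \<le> norm (x - y) * (2 * M)"
    using assms by (intro mult_mono norm_triangle_ineq3) auto
  finally show ?thesis by (simp add: algebra_simps)
qed

lemma abs_continuous_on_weighted_sq_dist:
  fixes z1 z2 :: "real \<Rightarrow> 'a::real_normed_vector"
  assumes ac1: "abs_continuous_on 0 b z1" and ac2: "abs_continuous_on 0 b z2" and "c \<ge> 0"
  shows "abs_continuous_on 0 b (\<lambda>t. exp (- c * t) * (norm (z1 t - z2 t))\<^sup>2)"
proof -
  have "continuous_on {0..b} (\<lambda>t. z1 t - z2 t)"
    using ac1 ac2 by (intro continuous_on_diff abs_continuous_on_imp_continuous_on)
  then have "bounded ((\<lambda>t. z1 t - z2 t) ` {0..b})"
    by (intro compact_imp_bounded compact_continuous_image) auto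
  then obtain M where "M > 0" and M: "\<And>t. t \<in> {0..b} \<Longrightarrow> norm (z1 t - z2 t) \<le> M"
    by (auto simp: bounded_pos)
  show ?thesis
  proof (rule abs_continuous_on_dominated[OF ac1 ac2, of "2 * M" "M\<^sup>2 * c"])
    fix u v assume uv: "0 \<le> u" "u \<le> v" "v \<le> b"
    define du dv where "du = z1 u - z2 u" and "dv = z1 v - z2 v"
    have "norm du \<le> M" "norm dv \<le> M" using M uv by (auto simp: du_def dv_def)
    have "dv - du = (z1 v - z1 u) - (z2 v - z2 u)" by (simp add: du_def dv_def algebra_simps)
    then have "norm (dv - du) \<le> norm (z1 v - z1 u) + norm (z2 v - z2 u)"
      by (metis norm_triangle_ineq4)
    have "norm (exp (- c * v) * (norm dv)\<^sup>2 - exp (- c * u) * (norm du)\<^sup>2)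
        = \<bar>exp (- c * v) * ((norm dv)\<^sup>2 - (norm du)\<^sup>2) + (norm du)\<^sup>2 * (exp (- c * v) - exp (- c * u))\<bar>"
      by (simp add: algebra_simps)
    also have "\<dots> \<le> exp (- c * v) * \<bar>(norm dv)\<^sup>2 - (norm du)\<^sup>2\<bar>
        + (norm du)\<^sup>2 * \<bar>exp (- c * v) - exp (- c * u)\<bar>"
      by (rule order_trans[OF abs_triangle_ineq]) (simp add: abs_mult)
    also have "\<dots> \<le> 1 * (2 * M * norm (dv - du)) + M\<^sup>2 * (c * (v - u))"
    proof (intro add_mono mult_mono)
      show "\<bar>(norm dv)\<^sup>2 - (norm du)\<^sup>2\<bar> \<le> 2 * M * norm (dv - du)"
        using \<open>norm dv \<le> M\<close> \<open>norm du \<le> M\<close> by (rule abs_norm_sq_diff_le)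
      show "(norm du)\<^sup>2 \<le> M\<^sup>2" using \<open>norm du \<le> M\<close> by (simp add: power_mono)
      show "\<bar>exp (- c * v) - exp (- c * u)\<bar> \<le> c * (v - u)"
        using \<open>c \<ge> 0\<close> uv by (intro abs_exp_neg_diff_le) auto
      show "exp (- c * v) \<le> 1" using \<open>c \<ge> 0\<close> uv by simp
    qed simp_all
    also have "\<dots> \<le> 2 * M * (norm (z1 v - z1 u) + norm (z2 v - z2 u)) + M\<^sup>2 * c * (v - u)"
      using \<open>norm (dv - du) \<le> _\<close> \<open>M > 0\<close> by simp
    finally show "norm (exp (- c * v) * (norm (z1 v - z2 v))\<^sup>2 - exp (- c * u) * (norm (z1 u - z2 u))\<^sup>2)
        \<le> 2 * M * (norm (z1 v - z1 u) + norm (z2 v - z2 u)) + M\<^sup>2 * c * (v - u)"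
      by (simp add: du_def dv_def)
  qed (use \<open>M > 0\<close> \<open>c \<ge> 0\<close> in auto)
qed

section \<open>Locally Lipschitz maps\<close>

lemma locally_lipschitz_iff:
  "locally_lipschitz F \<longleftrightarrow> (\<forall>x. \<exists>r>0. \<exists>L. L-lipschitz_on (ball x r) F)"
proof
  assume "locally_lipschitz F"
  show "\<forall>x. \<exists>r>0. \<exists>L. L-lipschitz_on (ball x r) F"
  proof
    fix x
    obtain r L where "r > 0" and L: "\<forall>y\<in>ball x r. \<forall>z\<in>ball x r. dist (F y) (F z) \<le> L * dist y z"
      using \<open>locally_lipschitz F\<close> unfolding locally_lipschitz_def by blast
    have "(max L 0)-lipschitz_on (ball x r) F"
    proof (rule lipschitz_onI)
      fix y z assume "y \<in> ball x r" "z \<in> ball x r"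
      then have "dist (F y) (F z) \<le> L * dist y z" using L by blast
      also have "\<dots> \<le> max L 0 * dist y z" by (intro mult_right_mono) auto
      finally show "dist (F y) (F z) \<le> max L 0 * dist y z" .
    qed simp
    with \<open>r > 0\<close> show "\<exists>r>0. \<exists>L. L-lipschitz_on (ball x r) F" by blast
  qed
qed (unfold locally_lipschitz_def lipschitz_on_def, blast)

lemma locally_lipschitzE:
  assumes "locally_lipschitz F"
  obtains r L where "r > 0" "L-lipschitz_on (ball x r) F"
  using assms unfolding locally_lipschitz_iff by blast

lemma locally_lipschitz_common_ball:
  assumes "locally_lipschitz F" "locally_lipschitz H"
  obtains r L M where "r > 0" "L-lipschitz_on (ball x r) F" "M-lipschitz_on (ball x r) H"
proof -
  obtain r L s M where "r > 0" "L-lipschitz_on (ball x r) F" "s > 0" "M-lipschitz_on (ball x s) H"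
    using locally_lipschitzE[OF assms(1)] locally_lipschitzE[OF assms(2)] by metis
  then show thesis
    by (intro that[of "min r s"]) (auto elim!: lipschitz_on_subset)
qed

lemma locally_lipschitz_add:
  fixes F H :: "'a::metric_space \<Rightarrow> 'b::real_normed_vector"
  assumes "locally_lipschitz F" "locally_lipschitz H"
  shows "locally_lipschitz (\<lambda>x. F x + H x)"
  unfolding locally_lipschitz_iff
  by (metis locally_lipschitz_common_ball[OF assms] lipschitz_on_add)

lemma locally_lipschitz_diff:
  fixes F H :: "'a::metric_space \<Rightarrow> 'b::real_normed_vector"
  assumes "locally_lipschitz F" "locally_lipschitz H"
  shows "locally_lipschitz (\<lambda>x. F x - H x)"
  unfolding locally_lipschitz_iff
  by (metis locally_lipschitz_common_ball[OF assms] lipschitz_on_diff)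

lemma locally_lipschitz_Pair:
  assumes "locally_lipschitz F" "locally_lipschitz H"
  shows "locally_lipschitz (\<lambda>x. (F x, H x))"
  unfolding locally_lipschitz_iff
  by (metis locally_lipschitz_common_ball[OF assms] lipschitz_on_Pair)

lemma locally_lipschitz_const: "locally_lipschitz (\<lambda>x. c)"
  unfolding locally_lipschitz_iff by (blast intro: lipschitz_on_constant zero_less_one)

lemma locally_lipschitz_sum:
  fixes H :: "'i \<Rightarrow> 'a::metric_space \<Rightarrow> 'b::real_normed_vector"
  assumes "\<And>i. i \<in> I \<Longrightarrow> locally_lipschitz (H i)"
  shows "locally_lipschitz (\<lambda>x. \<Sum>i\<in>I. H i x)"
  using assms
  by (induction I rule: infinite_finite_induct) (auto intro: locally_lipschitz_const locally_lipschitz_add)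

lemma lipschitz_on_ball_bounded:
  assumes "L-lipschitz_on (ball x r) F" "y \<in> ball x r"
  shows "norm (F y) \<le> norm (F x) + L * r"
proof -
  have "0 < r" using assms(2) zero_le_dist[of x y] unfolding mem_ball by linarith
  then have "x \<in> ball x r" by simp
  then have "dist (F y) (F x) \<le> L * dist y x" using assms by (intro lipschitz_onD) auto
  also have "\<dots> \<le> L * r"
    using assms lipschitz_on_nonneg[OF assms(1)] by (intro mult_left_mono) (auto simp: dist_commute)
  finally show ?thesis using norm_triangle_ineq2[of "F y" "F x"] by (simp add: dist_norm)
qed

lemma lipschitz_on_scaleR_bounded:
  fixes F :: "'a::metric_space \<Rightarrow> real" and H :: "'a \<Rightarrow> 'b::real_normed_vector"
  assumes F: "L-lipschitz_on U F" and H: "M-lipschitz_on U H"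
    and bounds: "\<And>y. y \<in> U \<Longrightarrow> \<bar>F y\<bar> \<le> B1" "\<And>y. y \<in> U \<Longrightarrow> norm (H y) \<le> B2" "B1 \<ge> 0" "B2 \<ge> 0"
  shows "(B1 * M + B2 * L)-lipschitz_on U (\<lambda>x. F x *\<^sub>R H x)"
proof (rule lipschitz_onI)
  fix y z assume "y \<in> U" "z \<in> U"
  have "F y *\<^sub>R H y - F z *\<^sub>R H z = F y *\<^sub>R (H y - H z) + (F y - F z) *\<^sub>R H z"
    by (simp add: algebra_simps)
  then have "dist (F y *\<^sub>R H y) (F z *\<^sub>R H z) \<le> \<bar>F y\<bar> * dist (H y) (H z) + \<bar>F y - F z\<bar> * norm (H z)"
    by (metis dist_norm norm_scaleR norm_triangle_ineq)
  also have "\<dots> \<le> B1 * (M * dist y z) + (L * dist y z) * B2"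
    using \<open>y \<in> U\<close> \<open>z \<in> U\<close> bounds lipschitz_onD[OF F] lipschitz_onD[OF H]
      lipschitz_on_nonneg[OF F] lipschitz_on_nonneg[OF H]
    by (intro add_mono mult_mono) (auto simp: dist_real_def)
  finally show "dist (F y *\<^sub>R H y) (F z *\<^sub>R H z) \<le> (B1 * M + B2 * L) * dist y z"
    by (simp add: algebra_simps)
next
  show "0 \<le> B1 * M + B2 * L"
    using bounds lipschitz_on_nonneg[OF F] lipschitz_on_nonneg[OF H] by simp
qed

lemma locally_lipschitz_scaleR:
  fixes F :: "'a::metric_space \<Rightarrow> real" and H :: "'a \<Rightarrow> 'b::real_normed_vector"
  assumes "locally_lipschitz F" "locally_lipschitz H"
  shows "locally_lipschitz (\<lambda>x. F x *\<^sub>R H x)"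
  unfolding locally_lipschitz_iff
proof
  fix x
  obtain r L M where "r > 0" and F: "L-lipschitz_on (ball x r) F" and H: "M-lipschitz_on (ball x r) H"
    using locally_lipschitz_common_ball[OF assms] .
  have "\<bar>F y\<bar> \<le> norm (F x) + L * r" "norm (H y) \<le> norm (H x) + M * r" if "y \<in> ball x r" for y
    using lipschitz_on_ball_bounded[OF F that] lipschitz_on_ball_bounded[OF H that] by auto
  moreover have "norm (F x) + L * r \<ge> 0" "norm (H x) + M * r \<ge> 0"
    using \<open>r > 0\<close> lipschitz_on_nonneg[OF F] lipschitz_on_nonneg[OF H] by auto
  ultimately show "\<exists>r>0. \<exists>L. L-lipschitz_on (ball x r) (\<lambda>x. F x *\<^sub>R H x)"
    using \<open>r > 0\<close> lipschitz_on_scaleR_bounded[OF F H] by blast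
qed

lemma locally_lipschitz_compose_lipschitz:
  assumes P: "C-lipschitz_on UNIV P" and F: "locally_lipschitz F"
  shows "locally_lipschitz (\<lambda>x. F (P x))"
  unfolding locally_lipschitz_iff
proof
  fix x
  obtain r L where "r > 0" and L: "L-lipschitz_on (ball (P x) r) F"
    using F by (rule locally_lipschitzE)
  define s where "s = r / (C + 1)"
  have "C \<ge> 0" using lipschitz_on_nonneg[OF P] .
  then have "s > 0" using \<open>r > 0\<close> by (simp add: s_def)
  have "P ` ball x s \<subseteq> ball (P x) r"
  proof
    fix y assume "y \<in> P ` ball x s"
    then obtain z where "z \<in> ball x s" "y = P z" by blast
    then have "dist (P x) y \<le> C * s" using lipschitz_onD[OF P, of x z] \<open>C \<ge> 0\<close>
      by (auto intro: order_trans[OF _ mult_left_mono] less_imp_le)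
    also have "C * s < r" using \<open>C \<ge> 0\<close> \<open>r > 0\<close> by (simp add: s_def field_simps)
    finally show "y \<in> ball (P x) r" by simp
  qed
  then have "(L * C)-lipschitz_on (ball x s) (\<lambda>x. F (P x))"
    using lipschitz_on_subset[OF P] L by (intro lipschitz_on_compose2) (auto elim: lipschitz_on_subset)
  with \<open>s > 0\<close> show "\<exists>s>0. \<exists>L. L-lipschitz_on (ball x s) (\<lambda>x. F (P x))" by blast
qed

lemma lipschitz_imp_locally_lipschitz:
  assumes "C-lipschitz_on UNIV P"
  shows "locally_lipschitz P"
  using assms unfolding locally_lipschitz_def lipschitz_on_def by (blast intro: zero_less_one)

lemma locally_lipschitz_vec_lambda:
  fixes H :: "'i::finite \<Rightarrow> 'a::metric_space \<Rightarrow> real"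
  assumes "\<And>i. locally_lipschitz (H i)"
  shows "locally_lipschitz (\<lambda>x. \<chi> i. H i x)"
proof -
  have "(\<lambda>x. \<chi> i. H i x) = (\<lambda>x. \<Sum>i\<in>UNIV. H i x *\<^sub>R axis i 1)"
    by (rule ext) (simp add: vec_eq_iff axis_def if_distrib sum.delta' cong: if_cong)
  then show ?thesis
    by (simp add: assms locally_lipschitz_sum locally_lipschitz_scaleR locally_lipschitz_const)
qed

lemma locally_lipschitz_of_gradient:
  fixes h :: "'a::euclidean_space \<Rightarrow> real"
  assumes "\<And>x. (h has_derivative (\<lambda>v. dh x \<bullet> v)) (at x)" and "locally_lipschitz dh"
  shows "locally_lipschitz h"
  unfolding locally_lipschitz_iff
proof
  fix x
  obtain r L where "r > 0" and L: "L-lipschitz_on (ball x r) dh"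
    using assms(2) by (rule locally_lipschitzE)
  define B where "B = norm (dh x) + L * r"
  have "B-lipschitz_on (ball x r) h"
  proof (rule bounded_derivative_imp_lipschitz)
    show "(h has_derivative (\<lambda>v. dh y \<bullet> v)) (at y within ball x r)" for y
      using assms(1) by (rule has_derivative_at_withinI)
    show "onorm (\<lambda>v. dh y \<bullet> v) \<le> B" if "y \<in> ball x r" for y
    proof (rule onorm_le)
      fix v
      have "norm (dh y \<bullet> v) \<le> norm (dh y) * norm v" using Cauchy_Schwarz_ineq2[of "dh y" v] by simp
      also have "\<dots> \<le> B * norm v"
        using lipschitz_on_ball_bounded[OF L that] by (simp add: B_def mult_right_mono)
      finally show "norm (dh y \<bullet> v) \<le> B * norm v" .
    qed
    show "0 \<le> B" using \<open>r > 0\<close> lipschitz_on_nonneg[OF L] by (simp add: B_def)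
  qed simp
  with \<open>r > 0\<close> show "\<exists>r>0. \<exists>L. L-lipschitz_on (ball x r) h" by blast
qed

text \<open>Finitely many balls of half the local radii cover the compact set.\<close>
lemma locally_lipschitz_near_compact:
  assumes F: "locally_lipschitz F" and "compact K"
  obtains \<rho> L where "\<rho> > 0" "\<And>y. y \<in> K \<Longrightarrow> L-lipschitz_on (ball y \<rho>) F"
proof -
  have "\<forall>x. \<exists>r L. r > 0 \<and> L-lipschitz_on (ball x r) F"
    using F unfolding locally_lipschitz_iff by blast
  then obtain r L where r: "\<And>x. r x > 0" and L: "\<And>x. (L x)-lipschitz_on (ball x (r x)) F"
    by metis
  obtain C where C: "C \<subseteq> K" "finite C" "K \<subseteq> (\<Union>c\<in>C. ball c (r c / 2))"
    using compactE_image[OF \<open>compact K\<close>, of K "\<lambda>c. ball c (r c / 2)"] r by force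
  show thesis
  proof (cases "C = {}")
    case True
    with C show thesis by (intro that[of 1]) auto
  next
    case False
    define \<rho> where "\<rho> = Min ((\<lambda>c. r c / 2) ` C)"
    have "\<rho> > 0" using C False r by (simp add: \<rho>_def)
    have "(Max (L ` C))-lipschitz_on (ball y \<rho>) F" if "y \<in> K" for y
    proof -
      obtain c where c: "c \<in> C" "y \<in> ball c (r c / 2)" using C \<open>y \<in> K\<close> by blast
      have "\<rho> \<le> r c / 2" unfolding \<rho>_def using C c by (intro Min_le) auto
      have "ball y \<rho> \<subseteq> ball c (r c)"
      proof
        fix z assume "z \<in> ball y \<rho>"
        then have "dist c z < r c / 2 + \<rho>"
          using c dist_triangle[of c z y] by (simp add: dist_commute)
        with \<open>\<rho> \<le> r c / 2\<close> show "z \<in> ball c (r c)" by simp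
      qed
      moreover have "L c \<le> Max (L ` C)" using C c by simp
      ultimately show ?thesis by (intro lipschitz_on_mono[OF L])
    qed
    with \<open>\<rho> > 0\<close> show thesis by (rule that)
  qed
qed

section \<open>Continuous dependence on the initial state and omega-limit sets\<close>

lemma caratheodory_solE:
  assumes "caratheodory_sol F D \<gamma> T"
  obtains E where "negligible E"
    "\<And>t. t \<in> {0..<T} \<Longrightarrow> t \<notin> E \<Longrightarrow> (\<gamma> has_vector_derivative F (\<gamma> t)) (at t)"
  using assms unfolding caratheodory_sol_def by blast

lemma exp_weighted_norm_sq_deriv_nonpos:
  fixes w :: "real \<Rightarrow> 'a::real_inner"
  assumes dw: "(w has_vector_derivative w') (at t)" and "w t \<bullet> w' \<le> L * (w t \<bullet> w t)"
  shows "\<exists>D. ((\<lambda>t. exp (- (2 * L) * t) * (norm (w t))\<^sup>2) has_real_derivative D) (at t) \<and> D \<le> 0"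
proof -
  have dsq: "((\<lambda>t. w t \<bullet> w t) has_real_derivative (w t \<bullet> w' + w' \<bullet> w t)) (at t)"
    unfolding has_real_derivative_iff_has_vector_derivative
    by (rule bounded_bilinear.has_vector_derivative[OF bounded_bilinear_inner dw dw])
  have dexp: "((\<lambda>t. exp (- (2 * L) * t)) has_real_derivative exp (- (2 * L) * t) * (- (2 * L))) (at t)"
    by (auto intro!: derivative_eq_intros)
  have "exp (- (2 * L) * t) * (2 * (w t \<bullet> w') - 2 * L * (w t \<bullet> w t)) \<le> 0"
    using assms(2) by (intro mult_nonneg_nonpos) auto
  then have "exp (- (2 * L) * t) * - (2 * L) * (w t \<bullet> w t) + (w t \<bullet> w' + w' \<bullet> w t) * exp (- (2 * L) * t) \<le> 0"
    by (simp add: inner_commute algebra_simps)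
  with DERIV_mult[OF dexp dsq] show ?thesis
    unfolding power2_norm_eq_inner by blast
qed

lemma caratheodory_sol_dist_le_exp:
  fixes F :: "'a::euclidean_space \<Rightarrow> 'a"
  assumes \<eta>: "caratheodory_sol F D \<eta> T" and \<zeta>: "caratheodory_sol F D \<zeta> T"
    and "0 \<le> b" "b < T" "L \<ge> 0"
    and one_sided: "\<And>t. t \<in> {0<..<b} \<Longrightarrow> (\<zeta> t - \<eta> t) \<bullet> (F (\<zeta> t) - F (\<eta> t)) \<le> L * (norm (\<zeta> t - \<eta> t))\<^sup>2"
  shows "norm (\<zeta> b - \<eta> b) \<le> exp (L * b) * norm (\<zeta> 0 - \<eta> 0)"
proof -
  obtain E\<eta> where "negligible E\<eta>" and der\<eta>: "\<And>t. t \<in> {0..<T} \<Longrightarrow> t \<notin> E\<eta> \<Longrightarrow>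
      (\<eta> has_vector_derivative F (\<eta> t)) (at t)"
    using \<eta> by (rule caratheodory_solE) blast
  obtain E\<zeta> where "negligible E\<zeta>" and der\<zeta>: "\<And>t. t \<in> {0..<T} \<Longrightarrow> t \<notin> E\<zeta> \<Longrightarrow>
      (\<zeta> has_vector_derivative F (\<zeta> t)) (at t)"
    using \<zeta> by (rule caratheodory_solE) blast
  have "abs_continuous_on 0 b \<eta>" "abs_continuous_on 0 b \<zeta>"
    using \<eta> \<zeta> \<open>0 \<le> b\<close> \<open>b < T\<close> by (auto simp: caratheodory_sol_def)
  define \<psi> where "\<psi> t = exp (- (2 * L) * t) * (norm (\<zeta> t - \<eta> t))\<^sup>2" for t
  have "\<psi> b \<le> \<psi> 0"
  proof (rule abs_continuous_on_nonincreasing[of 0 b \<psi> "E\<eta> \<union> E\<zeta>"])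
    show "abs_continuous_on 0 b \<psi>" unfolding \<psi>_def using \<open>L \<ge> 0\<close>
      by (intro abs_continuous_on_weighted_sq_dist \<open>abs_continuous_on 0 b \<zeta>\<close> \<open>abs_continuous_on 0 b \<eta>\<close>) simp
    show "negligible (E\<eta> \<union> E\<zeta>)" using \<open>negligible E\<eta>\<close> \<open>negligible E\<zeta>\<close> by simp
    fix t assume t: "t \<in> {0<..<b}" "t \<notin> E\<eta> \<union> E\<zeta>"
    have "((\<lambda>t. \<zeta> t - \<eta> t) has_vector_derivative F (\<zeta> t) - F (\<eta> t)) (at t)"
      using t \<open>b < T\<close> by (intro has_vector_derivative_diff der\<zeta> der\<eta>) auto
    moreover have "(\<zeta> t - \<eta> t) \<bullet> (F (\<zeta> t) - F (\<eta> t)) \<le> L * ((\<zeta> t - \<eta> t) \<bullet> (\<zeta> t - \<eta> t))"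
      using one_sided[OF t(1)] by (simp add: power2_norm_eq_inner)
    ultimately show "\<exists>D. (\<psi> has_real_derivative D) (at t) \<and> D \<le> 0"
      unfolding \<psi>_def[abs_def] by (rule exp_weighted_norm_sq_deriv_nonpos)
  qed fact
  then have "(norm (\<zeta> b - \<eta> b))\<^sup>2 \<le> exp (2 * L * b) * (norm (\<zeta> 0 - \<eta> 0))\<^sup>2"
    by (simp add: \<psi>_def exp_minus field_simps)
  also have "exp (2 * L * b) = (exp (L * b))\<^sup>2"
    by (simp add: power2_eq_square exp_add[symmetric])
  finally have "(norm (\<zeta> b - \<eta> b))\<^sup>2 \<le> (exp (L * b) * norm (\<zeta> 0 - \<eta> 0))\<^sup>2"
    by (simp add: power_mult_distrib)
  then show ?thesis by (rule power2_le_imp_le) simp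
qed

lemma continuous_on_interval_induct_less:
  fixes d :: "real \<Rightarrow> real"
  assumes "continuous_on {a..b} d"
    and step: "\<And>s. s \<in> {a..b} \<Longrightarrow> (\<And>t. t \<in> {a<..<s} \<Longrightarrow> d t < \<rho>) \<Longrightarrow> d s < \<rho>"
    and "t \<in> {a..b}"
  shows "d t < \<rho>"
proof (rule ccontr)
  assume "\<not> d t < \<rho>"
  define S where "S = {a..b} \<inter> d -` {\<rho>..}"
  have "S \<noteq> {}" "bdd_below S" using \<open>\<not> d t < \<rho>\<close> \<open>t \<in> {a..b}\<close> by (auto simp: S_def)
  moreover have "closed S"
    unfolding S_def using assms(1) by (rule continuous_closed_preimage) auto
  ultimately have "Inf S \<in> S" by (rule closed_contains_Inf)
  moreover have "d t < \<rho>" if "t \<in> {a<..<Inf S}" for t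
  proof (rule ccontr)
    assume "\<not> d t < \<rho>"
    with that \<open>Inf S \<in> S\<close> have "t \<in> S" by (auto simp: S_def)
    then have "Inf S \<le> t" using \<open>bdd_below S\<close> by (rule cInf_lower)
    with that show False by simp
  qed
  ultimately show False using step[of "Inf S"] by (auto simp: S_def)
qed

lemma inner_diff_le_of_lipschitz_on:
  fixes F G :: "'a::real_inner \<Rightarrow> 'a"
  assumes "(z1 - z2) \<bullet> (F z1 - F z2) \<le> (z1 - z2) \<bullet> (G z1 - G z2)"
    and "L-lipschitz_on U G" "z1 \<in> U" "z2 \<in> U"
  shows "(z1 - z2) \<bullet> (F z1 - F z2) \<le> L * (norm (z1 - z2))\<^sup>2"
proof -
  have "(z1 - z2) \<bullet> (F z1 - F z2) \<le> (z1 - z2) \<bullet> (G z1 - G z2)" by (rule assms(1))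
  also have "\<dots> \<le> norm (z1 - z2) * norm (G z1 - G z2)" by (rule norm_cauchy_schwarz)
  also have "\<dots> \<le> norm (z1 - z2) * (L * norm (z1 - z2))"
    using lipschitz_on_normD[OF assms(2-4)] by (rule mult_left_mono) simp
  also have "\<dots> = L * (norm (z1 - z2))\<^sup>2" by (simp add: power2_eq_square)
  finally show ?thesis .
qed

lemma caratheodory_sol_dist_le_exp_near:
  fixes F G :: "'a::euclidean_space \<Rightarrow> 'a"
  assumes mono: "\<And>z1 z2. z1 \<in> D \<Longrightarrow> z2 \<in> D \<Longrightarrow> (z1 - z2) \<bullet> (F z1 - F z2) \<le> (z1 - z2) \<bullet> (G z1 - G z2)"
    and "locally_lipschitz G" and \<eta>: "caratheodory_sol F D \<eta> T" and "0 \<le> t1" "t1 < T"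
  obtains \<rho> L where "\<rho> > 0"
    "\<And>\<zeta>. caratheodory_sol F D \<zeta> T \<Longrightarrow> exp (L * t1) * norm (\<zeta> 0 - \<eta> 0) < \<rho> \<Longrightarrow>
       norm (\<zeta> t1 - \<eta> t1) \<le> exp (L * t1) * norm (\<zeta> 0 - \<eta> 0)"
proof -
  have "abs_continuous_on 0 t1 \<eta>" using \<eta> \<open>0 \<le> t1\<close> \<open>t1 < T\<close> by (auto simp: caratheodory_sol_def)
  then have cont\<eta>: "continuous_on {0..t1} \<eta>" by (rule abs_continuous_on_imp_continuous_on)
  then have "compact (\<eta> ` {0..t1})" by (intro compact_continuous_image) auto
  with \<open>locally_lipschitz G\<close> obtain \<rho> L where "\<rho> > 0"
    and lip: "\<And>y. y \<in> \<eta> ` {0..t1} \<Longrightarrow> L-lipschitz_on (ball y \<rho>) G"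
    by (rule locally_lipschitz_near_compact) blast
  have "norm (\<zeta> t1 - \<eta> t1) \<le> exp (L * t1) * norm (\<zeta> 0 - \<eta> 0)"
    if \<zeta>: "caratheodory_sol F D \<zeta> T" and small: "exp (L * t1) * norm (\<zeta> 0 - \<eta> 0) < \<rho>" for \<zeta>
  proof -
    have "L \<ge> 0" using lip[of "\<eta> 0"] \<open>0 \<le> t1\<close> lipschitz_on_nonneg by auto
    have close: "norm (\<zeta> b - \<eta> b) \<le> exp (L * b) * norm (\<zeta> 0 - \<eta> 0)"
      if "b \<in> {0..t1}" "\<And>t. t \<in> {0<..<b} \<Longrightarrow> norm (\<zeta> t - \<eta> t) < \<rho>" for b
    proof (rule caratheodory_sol_dist_le_exp[OF \<eta> \<zeta> _ _ \<open>L \<ge> 0\<close>])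
      fix t assume t: "t \<in> {0<..<b}"
      then have "\<eta> t \<in> D" "\<zeta> t \<in> D" using \<eta> \<zeta> \<open>b \<in> {0..t1}\<close> \<open>t1 < T\<close> by (auto simp: caratheodory_sol_def)
      have "\<zeta> t \<in> ball (\<eta> t) \<rho>" "\<eta> t \<in> ball (\<eta> t) \<rho>"
        using that(2)[OF t] \<open>\<rho> > 0\<close> by (auto simp: dist_norm norm_minus_commute)
      with mono[OF \<open>\<zeta> t \<in> D\<close> \<open>\<eta> t \<in> D\<close>] show "(\<zeta> t - \<eta> t) \<bullet> (F (\<zeta> t) - F (\<eta> t)) \<le> L * (norm (\<zeta> t - \<eta> t))\<^sup>2"
        using t \<open>b \<in> {0..t1}\<close> by (intro inner_diff_le_of_lipschitz_on[OF _ lip]) auto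
    qed (use that \<open>t1 < T\<close> in auto)
    \<comment> \<open>Before the solutions first get \<open>\<rho>\<close> apart, \<open>close\<close> keeps them closer than \<open>\<rho>\<close>.\<close>
    have "norm (\<zeta> t - \<eta> t) < \<rho>" if "t \<in> {0..t1}" for t
    proof (rule continuous_on_interval_induct_less[OF _ _ that])
      have "abs_continuous_on 0 t1 \<zeta>" using \<zeta> \<open>0 \<le> t1\<close> \<open>t1 < T\<close> by (simp add: caratheodory_sol_def)
      then have "continuous_on {0..t1} \<zeta>" by (rule abs_continuous_on_imp_continuous_on)
      then show "continuous_on {0..t1} (\<lambda>t. norm (\<zeta> t - \<eta> t))"
        using cont\<eta> by (intro continuous_intros)
      fix s assume s: "s \<in> {0..t1}" "\<And>t. t \<in> {0<..<s} \<Longrightarrow> norm (\<zeta> t - \<eta> t) < \<rho>"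
      have "norm (\<zeta> s - \<eta> s) \<le> exp (L * s) * norm (\<zeta> 0 - \<eta> 0)" by (rule close[OF s])
      also have "\<dots> \<le> exp (L * t1) * norm (\<zeta> 0 - \<eta> 0)"
        using s(1) \<open>L \<ge> 0\<close> by (auto intro!: mult_right_mono mult_left_mono)
      finally show "norm (\<zeta> s - \<eta> s) < \<rho>" using small by linarith
    qed
    then show ?thesis using \<open>0 \<le> t1\<close> by (intro close) auto
  qed
  with \<open>\<rho> > 0\<close> show thesis by (rule that)
qed

lemma caratheodory_sol_inf_shift:
  fixes F :: "'a::euclidean_space \<Rightarrow> 'a"
  assumes sol: "caratheodory_sol_inf F D \<gamma>" and "0 \<le> s"
  shows "caratheodory_sol_inf F D (\<lambda>t. \<gamma> (t + s))"
  unfolding caratheodory_sol_inf_def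
proof (intro allI impI)
  fix T :: real assume "T > 0"
  then have \<gamma>: "caratheodory_sol F D \<gamma> (T + s)" using sol \<open>0 \<le> s\<close> by (simp add: caratheodory_sol_inf_def)
  define E where "E = {t \<in> {0..<T + s}. \<not> (\<gamma> has_vector_derivative F (\<gamma> t)) (at t)}"
  have "{t \<in> {0..<T}. \<not> ((\<lambda>t. \<gamma> (t + s)) has_vector_derivative F (\<gamma> (t + s))) (at t)} \<subseteq> (+) (- s) ` E"
  proof
    fix t assume t: "t \<in> {t \<in> {0..<T}. \<not> ((\<lambda>t. \<gamma> (t + s)) has_vector_derivative F (\<gamma> (t + s))) (at t)}"
    have "\<not> (\<gamma> has_vector_derivative F (\<gamma> (t + s))) (at (t + s))"
    proof
      assume "(\<gamma> has_vector_derivative F (\<gamma> (t + s))) (at (t + s))"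
      moreover have "((\<lambda>t. t + s) has_vector_derivative 1) (at t)"
        by (auto intro!: derivative_eq_intros)
      ultimately have "((\<lambda>t. \<gamma> (t + s)) has_vector_derivative F (\<gamma> (t + s))) (at t)"
        using vector_diff_chain_at[of "\<lambda>t. t + s" 1 t \<gamma>] by (simp add: o_def)
      with t show False by simp
    qed
    with t \<open>0 \<le> s\<close> have "t + s \<in> E" by (auto simp: E_def)
    then show "t \<in> (+) (- s) ` E" by (metis add.commute add_minus_cancel image_eqI)
  qed
  moreover have "negligible ((+) (- s) ` E)"
    using \<gamma> by (intro negligible_translation) (simp add: caratheodory_sol_def E_def)
  moreover have "abs_continuous_on 0 b (\<lambda>t. \<gamma> (t + s))" if "0 \<le> b" "b < T" for b
  proof -
    have "abs_continuous_on 0 (b + s) \<gamma>" using \<gamma> that \<open>0 \<le> s\<close> by (simp add: caratheodory_sol_def)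
    then have "abs_continuous_on s (b + s) \<gamma>" using \<open>0 \<le> s\<close> by (rule abs_continuous_on_subinterval) simp
    from abs_continuous_on_shift[OF this, of s] show ?thesis by simp
  qed
  ultimately show "caratheodory_sol F D (\<lambda>t. \<gamma> (t + s)) T"
    using \<gamma> \<open>0 \<le> s\<close> by (auto simp: caratheodory_sol_def intro: negligible_subset)
qed

lemma omega_limit_invariant:
  fixes F G :: "'a::euclidean_space \<Rightarrow> 'a"
  assumes sol: "caratheodory_sol_inf F D \<gamma>"
    and mono: "\<And>z1 z2. z1 \<in> D \<Longrightarrow> z2 \<in> D \<Longrightarrow> (z1 - z2) \<bullet> (F z1 - F z2) \<le> (z1 - z2) \<bullet> (G z1 - G z2)"
    and "locally_lipschitz G"
  shows "invariant_set F D (omega_limit \<gamma>)"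
  unfolding invariant_set_def
proof (intro allI impI ballI)
  fix \<eta> T t
  assume "T > 0 \<and> caratheodory_sol F D \<eta> T \<and> \<eta> 0 \<in> omega_limit \<gamma>" and t: "t \<in> {0..<T}"
  then have "T > 0" and \<eta>: "caratheodory_sol F D \<eta> T" and "\<eta> 0 \<in> omega_limit \<gamma>" by auto
  obtain \<rho> L where "\<rho> > 0" and close: "\<And>\<zeta>. caratheodory_sol F D \<zeta> T \<Longrightarrow>
      exp (L * t) * norm (\<zeta> 0 - \<eta> 0) < \<rho> \<Longrightarrow> norm (\<zeta> t - \<eta> t) \<le> exp (L * t) * norm (\<zeta> 0 - \<eta> 0)"
    using caratheodory_sol_dist_le_exp_near[OF mono \<open>locally_lipschitz G\<close> \<eta>] t by auto
  obtain s where s: "filterlim s at_top sequentially" and "(\<lambda>k. \<gamma> (s k)) \<longlonglongrightarrow> \<eta> 0"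
    using \<open>\<eta> 0 \<in> omega_limit \<gamma>\<close> unfolding omega_limit_def by blast
  then have small: "(\<lambda>k. exp (L * t) * norm (\<gamma> (s k) - \<eta> 0)) \<longlonglongrightarrow> 0"
    by (intro tendsto_mult_right_zero) (simp add: tendsto_norm_zero_iff LIM_zero_iff)
  have "eventually (\<lambda>k. 0 \<le> s k) sequentially" using s by (simp add: filterlim_at_top)
  moreover have "eventually (\<lambda>k. exp (L * t) * norm (\<gamma> (s k) - \<eta> 0) < \<rho>) sequentially"
    using small \<open>\<rho> > 0\<close> by (rule order_tendstoD(2))
  ultimately have "eventually (\<lambda>k. norm (\<gamma> (t + s k) - \<eta> t) \<le> exp (L * t) * norm (\<gamma> (s k) - \<eta> 0)) sequentially"
  proof eventually_elim
    case (elim k)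
    then have "caratheodory_sol F D (\<lambda>\<tau>. \<gamma> (\<tau> + s k)) T"
      using caratheodory_sol_inf_shift[OF sol] \<open>T > 0\<close> by (auto simp: caratheodory_sol_inf_def)
    from close[OF this] elim show ?case by simp
  qed
  then have "(\<lambda>k. \<gamma> (t + s k)) \<longlonglongrightarrow> \<eta> t"
    by (subst LIM_zero_iff[symmetric]) (rule Lim_null_comparison[OF _ small])
  moreover have "filterlim (\<lambda>k. t + s k) at_top sequentially"
    by (rule filterlim_tendsto_add_at_top[OF tendsto_const s])
  ultimately show "\<eta> t \<in> omega_limit \<gamma>" unfolding omega_limit_def by blast
qed

section \<open>The primal-dual dynamics\<close>

text \<open>The gradient field \<open>(\<nabla>\<^sub>x L, \<nabla>\<^sub>\<lambda> L)\<close> of the Lagrangian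
  \<open>L(x, \<lambda>) = f x - \<lambda> \<bullet> g x\<close>; the primal-dual field is its projection keeping \<open>\<lambda> \<ge> 0\<close>.\<close>
definition lagrangian_gradient_field ::
  "(real^'n \<Rightarrow> real^'n) \<Rightarrow> ('m::finite \<Rightarrow> real^'n \<Rightarrow> real) \<Rightarrow> ('m \<Rightarrow> real^'n \<Rightarrow> real^'n)
   \<Rightarrow> (real^'n) \<times> (real^'m) \<Rightarrow> (real^'n) \<times> (real^'m)" where
  "lagrangian_gradient_field df g dg z =
     (df (fst z) - (\<Sum>i\<in>UNIV. (snd z $ i) *\<^sub>R dg i (fst z)), \<chi> i. g i (fst z))"

lemma proj_pos_monotone:
  fixes a b p q :: real
  assumes "a \<ge> 0" "b \<ge> 0"
  shows "(a - b) * (proj_pos p a - proj_pos q b) \<le> (a - b) * (p - q)"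
proof -
  consider "a > 0" "b > 0" | "a > 0" "b = 0" | "a = 0" "b > 0" | "a = 0" "b = 0"
    using assms by fastforce
  then show ?thesis
  proof cases
    case 2
    then have "a * q \<le> a * max 0 q" by (intro mult_left_mono) auto
    with 2 show ?thesis by (simp add: proj_pos_def right_diff_distrib)
  next
    case 3
    then have "b * p \<le> b * max 0 p" by (intro mult_left_mono) auto
    with 3 show ?thesis by (simp add: proj_pos_def right_diff_distrib left_diff_distrib)
  qed (simp_all add: proj_pos_def)
qed

lemma primal_dual_field_inner_le:
  assumes "z1 \<in> pd_domain" "z2 \<in> pd_domain"
  shows "(z1 - z2) \<bullet> (primal_dual_field df g dg z1 - primal_dual_field df g dg z2)
       \<le> (z1 - z2) \<bullet> (lagrangian_gradient_field df g dg z1 - lagrangian_gradient_field df g dg z2)"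
proof -
  obtain x1 l1 x2 l2 where z: "z1 = (x1, l1)" "z2 = (x2, l2)" by fastforce
  have l: "\<And>i. l1 $ i \<ge> 0" "\<And>i. l2 $ i \<ge> 0" using assms z unfolding pd_domain_def by auto
  have "(l1 - l2) \<bullet> ((\<chi> i. proj_pos (g i x1) (l1 $ i)) - (\<chi> i. proj_pos (g i x2) (l2 $ i)))
      \<le> (l1 - l2) \<bullet> ((\<chi> i. g i x1) - (\<chi> i. g i x2))"
    unfolding inner_vec_def by (intro sum_mono) (simp add: proj_pos_monotone[OF l(1) l(2)])
  then show ?thesis unfolding z primal_dual_field_def lagrangian_gradient_field_def by simp
qed

lemma locally_lipschitz_lagrangian_gradient_field:
  fixes df :: "real^'n \<Rightarrow> real^'n" and g :: "'m::finite \<Rightarrow> real^'n \<Rightarrow> real"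
  assumes "locally_lipschitz df" "\<And>i. locally_lipschitz (dg i)" "\<And>i. locally_lipschitz (g i)"
  shows "locally_lipschitz (lagrangian_gradient_field df g dg)"
proof -
  have fst: "locally_lipschitz (\<lambda>z :: (real^'n) \<times> (real^'m). h (fst z))"
    if "locally_lipschitz h" for h :: "real^'n \<Rightarrow> 'b::metric_space"
    by (rule locally_lipschitz_compose_lipschitz[OF _ that, of 1])
      (intro lipschitz_onI, simp_all add: dist_fst_le)
  have snd: "locally_lipschitz (\<lambda>z :: (real^'n) \<times> (real^'m). snd z $ i)" for i
    by (rule lipschitz_imp_locally_lipschitz[of 1])
      (intro lipschitz_onI, simp_all add: order_trans[OF dist_vec_nth_le dist_snd_le])
  show ?thesis
    unfolding lagrangian_gradient_field_def[abs_def]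
    by (intro locally_lipschitz_Pair locally_lipschitz_diff locally_lipschitz_sum
        locally_lipschitz_scaleR locally_lipschitz_vec_lambda snd fst assms)
qed

theorem lemma4p4:
  fixes f :: "real^'n \<Rightarrow> real" and df :: "real^'n \<Rightarrow> real^'n"
    and g :: "'m::finite \<Rightarrow> real^'n \<Rightarrow> real" and dg :: "'m \<Rightarrow> real^'n \<Rightarrow> real^'n"
    and \<gamma> :: "real \<Rightarrow> (real^'n) \<times> (real^'m)"
  assumes f_grad: "\<And>x. (f has_derivative (\<lambda>h. df x \<bullet> h)) (at x)"
    and df_cont: "continuous_on UNIV df"
    and f_sconc: "strictly_concave_on UNIV f"
    and g_grad: "\<And>i x. (g i has_derivative (\<lambda>h. dg i x \<bullet> h)) (at x)"
    and dg_cont: "\<And>i. continuous_on UNIV (dg i)"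
    and g_conv: "\<And>i. convex_on UNIV (g i)"
    and df_lip: "locally_lipschitz df"
    and dg_lip: "\<And>i. locally_lipschitz (dg i)"
    and slater: "\<exists>x. \<forall>i. g i x < 0"
    and sol: "caratheodory_sol_inf (primal_dual_field df g dg) pd_domain \<gamma>"
  shows "invariant_set (primal_dual_field df g dg) pd_domain (omega_limit \<gamma>)"
proof (rule omega_limit_invariant[OF sol primal_dual_field_inner_le])
  show "locally_lipschitz (lagrangian_gradient_field df g dg)"
    using df_lip dg_lip locally_lipschitz_of_gradient[OF g_grad dg_lip]
    by (rule locally_lipschitz_lagrangian_gradient_field)
qed

end
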